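(* If $T$ is a subcubic tree of order $n$, then $\frac{2n}{3}\le \psi(T)\le \frac{4n+2}{5}$. Moreover, both bounds are tight, i.e., each bound is attained with equality by some subcubic trees.
   Context: All graphs are finite, simple and undirected. A subcubic tree is a tree of maximum degree at most $3$. A dissociation set in a graph $G$ is a vertex subset $F$ such that the induced subgraph $G[F]$ has maximum degree at most $1$; the dissociation number $\psi(G)$ is the maximum cardinality of a dissociation set of $G$. *)

theory Defs
  imports Complex_Main
begin

definition simple_graph :: "'a set \<Rightarrow> 'a set set \<Rightarrow> bool" where
  "simple_graph V E \<longleftrightarrow> finite V \<and>
     (\<forall>e\<in>E. \<exists>u v. u \<noteq> v \<and> u \<in> V \<and> v \<in> V \<and> e = {u, v})"

definition adj :: "'a set set \<Rightarrow> 'a \<Rightarrow> 'a \<Rightarrow> bool" where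
  "adj E u v \<longleftrightarrow> u \<noteq> v \<and> {u, v} \<in> E"

definition degree :: "'a set \<Rightarrow> 'a set set \<Rightarrow> 'a \<Rightarrow> nat" where
  "degree V E v = card {u \<in> V. adj E u v}"

definition connected_graph :: "'a set \<Rightarrow> 'a set set \<Rightarrow> bool" where
  "connected_graph V E \<longleftrightarrow>
     (\<forall>u\<in>V. \<forall>v\<in>V. (\<lambda>x y. x \<in> V \<and> y \<in> V \<and> adj E x y)\<^sup>*\<^sup>* u v)"

definition is_cycle :: "'a set \<Rightarrow> 'a set set \<Rightarrow> 'a list \<Rightarrow> bool" where
  "is_cycle V E xs \<longleftrightarrow> length xs \<ge> 3 \<and> distinct xs \<and> set xs \<subseteq> V \<and>
     (\<forall>i. Suc i < length xs \<longrightarrow> adj E (xs ! i) (xs ! Suc i)) \<and>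
     adj E (last xs) (hd xs)"

definition is_tree :: "'a set \<Rightarrow> 'a set set \<Rightarrow> bool" where
  "is_tree V E \<longleftrightarrow> simple_graph V E \<and> V \<noteq> {} \<and> connected_graph V E \<and>
     \<not> (\<exists>xs. is_cycle V E xs)"

definition subcubic_tree :: "'a set \<Rightarrow> 'a set set \<Rightarrow> bool" where
  "subcubic_tree V E \<longleftrightarrow> is_tree V E \<and> (\<forall>v\<in>V. degree V E v \<le> 3)"

definition dissociation_set :: "'a set \<Rightarrow> 'a set set \<Rightarrow> 'a set \<Rightarrow> bool" where
  "dissociation_set V E F \<longleftrightarrow> F \<subseteq> V \<and> (\<forall>v\<in>F. degree F E v \<le> 1)"

definition dissociation_number :: "'a set \<Rightarrow> 'a set set \<Rightarrow> nat" where
  "dissociation_number V E = Max {card F | F. dissociation_set V E F}"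

end

theory Submission
  imports Defs
begin

text \<open>Lower bound: every nonempty forest contains a vertex set R, namely an isolated vertex, an
  isolated edge, a pendant star with at least two leaves, or a pendant path on three vertices,
  together with a dissociation set A of R with 3|A| \<ge> 2|R| whose vertices have no neighbours
  outside R; induction on the order of the forest gives \<psi> \<ge> 2n/3.
  Upper bound: for a maximum dissociation set F of a connected subcubic graph, the edges inside F
  form a matching and every other edge meets one of the n - |F| vertices outside F, so
  n - 1 \<le> |E| \<le> |F|/2 + 3(n - |F|), that is 5|F| \<le> 4n + 2.
  The path on three vertices and a single edge attain the two bounds.\<close>

lemma adj_commute: "adj E u v \<longleftrightarrow> adj E v u"
  by (auto simp: adj_def insert_commute)

lemma adj_irrefl: "\<not> adj E u u"
  by (simp add: adj_def)

definition neighbors :: "'a set \<Rightarrow> 'a set set \<Rightarrow> 'a \<Rightarrow> 'a set" where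
  "neighbors V E v = {u \<in> V. adj E u v}"

lemma mem_neighbors_iff: "u \<in> neighbors V E v \<longleftrightarrow> u \<in> V \<and> adj E u v"
  by (simp add: neighbors_def)

lemma self_not_mem_neighbors: "v \<notin> neighbors V E v"
  by (simp add: mem_neighbors_iff adj_irrefl)

lemma neighbors_subset: "neighbors W E v \<subseteq> W"
  by (auto simp: neighbors_def)

lemma neighbors_mono: "W \<subseteq> V \<Longrightarrow> neighbors W E v \<subseteq> neighbors V E v"
  by (auto simp: neighbors_def)

lemma degree_eq_card_neighbors: "degree V E v = card (neighbors V E v)"
  by (simp add: degree_def neighbors_def)

lemma finite_neighbors: "finite V \<Longrightarrow> finite (neighbors V E v)"
  by (simp add: neighbors_def)

lemma degree_le_card_minus_1:
  assumes "finite V" "v \<in> V"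
  shows "degree V E v \<le> card V - 1"
proof -
  have "degree V E v \<le> card (V - {v})"
    unfolding degree_def using assms(1) by (intro card_mono) (auto simp: adj_irrefl)
  then show ?thesis using assms by (simp add: card_Diff_singleton)
qed

lemma neighbors_eq_singleton:
  "degree V E v = 1 \<Longrightarrow> u \<in> neighbors V E v \<Longrightarrow> neighbors V E v = {u}"
  by (metis card_1_singletonE degree_eq_card_neighbors singletonD)

lemma mem_neighbors_commute: "u \<in> neighbors V E v \<Longrightarrow> v \<in> V \<Longrightarrow> v \<in> neighbors V E u"
  by (simp add: mem_neighbors_iff adj_commute)

subsection \<open>Acyclic graphs\<close>

definition is_path :: "'a set \<Rightarrow> 'a set set \<Rightarrow> 'a list \<Rightarrow> bool" where
  "is_path V E xs \<longleftrightarrow> distinct xs \<and> set xs \<subseteq> V \<and>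
     (\<forall>i. Suc i < length xs \<longrightarrow> adj E (xs ! i) (xs ! Suc i))"

lemma is_cycle_iff_path:
  "is_cycle V E xs \<longleftrightarrow> 3 \<le> length xs \<and> is_path V E xs \<and> adj E (last xs) (hd xs)"
  by (auto simp: is_cycle_def is_path_def)

lemma is_cycle_mono: "is_cycle W E xs \<Longrightarrow> W \<subseteq> V \<Longrightarrow> is_cycle V E xs"
  by (auto simp: is_cycle_def)

lemma is_path_Cons:
  assumes "is_path V E xs" "xs \<noteq> []" "y \<in> V" "y \<notin> set xs" "adj E y (hd xs)"
  shows "is_path V E (y # xs)"
  unfolding is_path_def
proof (intro conjI allI impI)
  fix i assume "Suc i < length (y # xs)"
  then show "adj E ((y # xs) ! i) ((y # xs) ! Suc i)"
    using assms by (cases i) (auto simp: is_path_def hd_conv_nth)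
qed (use assms in \<open>auto simp: is_path_def\<close>)

lemma is_cycle_take_chord:
  assumes "is_path V E xs" "2 \<le> j" "j < length xs" "adj E (xs ! j) (hd xs)"
  shows "is_cycle V E (take (Suc j) xs)"
  unfolding is_cycle_iff_path
proof (intro conjI)
  show "is_path V E (take (Suc j) xs)"
    using assms(1) set_take_subset[of "Suc j" xs] by (auto simp: is_path_def)
  have "last (take (Suc j) xs) = xs ! j"
    using assms(3) by (simp add: take_Suc_conv_app_nth)
  moreover have "hd (take (Suc j) xs) = hd xs"
    using assms(3) by (cases xs) auto
  ultimately show "adj E (last (take (Suc j) xs)) (hd (take (Suc j) xs))"
    using assms(4) by simp
qed (use assms in auto)

lemma longest_path_exists:
  assumes "finite V" "V \<noteq> {}"
  obtains xs where "is_path V E xs" "xs \<noteq> []"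
    "\<And>ys. is_path V E ys \<Longrightarrow> length ys \<le> length xs"
proof -
  define P where "P n \<longleftrightarrow> (\<exists>xs. is_path V E xs \<and> xs \<noteq> [] \<and> length xs = n)" for n
  obtain v where "v \<in> V" using assms(2) by blast
  then have start: "P 1" unfolding P_def by (intro exI[of _ "[v]"]) (auto simp: is_path_def)
  moreover have bounded: "\<forall>n. P n \<longrightarrow> n \<le> card V"
  proof (intro allI impI)
    fix n assume "P n"
    then obtain xs where "distinct xs" "set xs \<subseteq> V" "length xs = n"
      unfolding P_def is_path_def by blast
    then show "n \<le> card V" using card_mono[OF assms(1)] by (metis distinct_card)
  qed
  obtain n where "P n" and greatest: "\<forall>m. P m \<longrightarrow> m \<le> n"
    using Nat.ex_has_greatest_nat[OF start bounded] by blast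
  then obtain xs where "is_path V E xs" "xs \<noteq> []" "length xs = n"
    unfolding P_def by blast
  moreover have "length ys \<le> n" if "is_path V E ys" for ys
    using that greatest unfolding P_def by (cases ys) auto
  ultimately show ?thesis using that by blast
qed

text \<open>The first vertex of a longest path has all its neighbours on the path; a second
  neighbour besides its successor would close a cycle.\<close>
lemma acyclic_has_vertex_degree_le_1:
  assumes fin: "finite V" and ne: "V \<noteq> {}" and acyclic: "\<nexists>xs. is_cycle V E xs"
  obtains v where "v \<in> V" "degree V E v \<le> 1"
proof -
  obtain xs where path: "is_path V E xs" and "xs \<noteq> []"
    and longest: "\<And>ys. is_path V E ys \<Longrightarrow> length ys \<le> length xs"
    using longest_path_exists[OF fin ne] by blast
  have hd_in: "hd xs \<in> V" using path \<open>xs \<noteq> []\<close> by (auto simp: is_path_def)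
  have on_path: "y \<in> set xs" if "y \<in> neighbors V E (hd xs)" for y
  proof (rule ccontr)
    assume "y \<notin> set xs"
    then have "is_path V E (y # xs)"
      using that is_path_Cons[OF path \<open>xs \<noteq> []\<close>] by (simp add: mem_neighbors_iff)
    then show False using longest[of "y # xs"] by simp
  qed
  have "neighbors V E (hd xs) \<subseteq> {xs ! 1}"
  proof
    fix y assume y: "y \<in> neighbors V E (hd xs)"
    then obtain j where j: "j < length xs" "xs ! j = y"
      using on_path by (auto simp: in_set_conv_nth)
    have "j \<noteq> 0"
      using y j \<open>xs \<noteq> []\<close> by (cases j) (auto simp: mem_neighbors_iff hd_conv_nth adj_irrefl)
    moreover have "\<not> 2 \<le> j"
      using is_cycle_take_chord[OF path _ j(1)] y j acyclic by (auto simp: mem_neighbors_iff)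
    ultimately have "j = 1" by linarith
    then show "y \<in> {xs ! 1}" using j by simp
  qed
  then have "degree V E (hd xs) \<le> 1"
    unfolding degree_eq_card_neighbors using card_mono[of "{xs ! 1}"] by fastforce
  with hd_in show ?thesis using that by blast
qed

lemma dissociation_set_empty: "dissociation_set V E {}"
  by (simp add: dissociation_set_def)

lemma dissociation_set_mono: "dissociation_set W E F \<Longrightarrow> W \<subseteq> V \<Longrightarrow> dissociation_set V E F"
  by (auto simp: dissociation_set_def)

lemma dissociation_set_card_le_2:
  assumes "finite A" "A \<subseteq> V" "card A \<le> 2"
  shows "dissociation_set V E A"
  unfolding dissociation_set_def
proof (intro conjI ballI)
  fix v assume "v \<in> A"
  then have "degree A E v \<le> card A - 1" by (rule degree_le_card_minus_1[OF assms(1)])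
  then show "degree A E v \<le> 1" using assms(3) by linarith
qed (use assms in auto)

lemma dissociation_set_Un:
  assumes F: "dissociation_set V E F" and A: "dissociation_set V E A"
    and no_edge: "\<forall>a\<in>A. \<forall>x\<in>F. \<not> adj E x a"
  shows "dissociation_set V E (F \<union> A)"
proof -
  have "neighbors (F \<union> A) E v = neighbors F E v" if "v \<in> F" for v
    using that no_edge adj_commute[of E] by (auto simp: mem_neighbors_iff)
  moreover have "neighbors (F \<union> A) E v = neighbors A E v" if "v \<in> A" for v
    using that no_edge by (auto simp: mem_neighbors_iff)
  ultimately show ?thesis
    using F A unfolding dissociation_set_def degree_eq_card_neighbors by auto
qed

subsection \<open>The lower bound for forests\<close>

text \<open>Removing R and adding A to a dissociation set of the rest preserves the ratio 2/3.\<close>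
definition dense_piece :: "'a set \<Rightarrow> 'a set set \<Rightarrow> 'a set \<Rightarrow> 'a set \<Rightarrow> bool" where
  "dense_piece V E R A \<longleftrightarrow> R \<subseteq> V \<and> R \<noteq> {} \<and> dissociation_set R E A \<and>
     (\<forall>a\<in>A. neighbors V E a \<subseteq> R) \<and> 2 * card R \<le> 3 * card A"

lemma dense_piece_isolated:
  assumes "finite V" "v \<in> V" "degree V E v = 0"
  shows "dense_piece V E {v} {v}"
  using assms by (auto simp: dense_piece_def dissociation_set_card_le_2 degree_eq_card_neighbors
      finite_neighbors)

lemma dense_piece_edge_component:
  assumes "neighbors V E u = {v}" "neighbors V E v = {u}"
  shows "dense_piece V E {u, v} {u, v}"
proof -
  have "v \<in> V" "u \<in> V" using assms by (auto simp: mem_neighbors_iff dest: equalityD2)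
  then show ?thesis
    using assms by (auto simp: dense_piece_def dissociation_set_card_le_2 card_insert_if)
qed

lemma dense_piece_pendant_star:
  assumes A_sub: "A \<subseteq> V" and "2 \<le> card A" and "\<forall>a\<in>A. neighbors V E a = {u}"
  shows "dense_piece V E (insert u A) A"
proof -
  have "finite A" using assms(2) by (metis card.infinite not_numeral_le_zero)
  obtain a where "a \<in> A" using \<open>finite A\<close> assms(2) by fastforce
  then have "u \<in> neighbors V E a" using assms(3) by simp
  then have "u \<in> V" by (simp add: mem_neighbors_iff)
  have "u \<notin> A" using assms(3) self_not_mem_neighbors by fastforce
  have "neighbors A E a = {}" if "a \<in> A" for a
    using neighbors_mono[OF A_sub, of E a] neighbors_subset[of A E a] assms(3) that \<open>u \<notin> A\<close>
    by auto
  then have "degree A E a = 0" if "a \<in> A" for a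
    using that by (simp add: degree_eq_card_neighbors)
  then have "dissociation_set (insert u A) E A" by (auto simp: dissociation_set_def)
  then show ?thesis
    using assms \<open>finite A\<close> \<open>u \<in> V\<close> \<open>u \<notin> A\<close> by (auto simp: dense_piece_def)
qed

lemma dense_piece_pendant_path:
  assumes "neighbors V E a = {u}" "neighbors V E u = {a, w}"
  shows "dense_piece V E {a, u, w} {a, u}"
proof -
  have "a \<in> V" "u \<in> V" "w \<in> V" using assms by (auto simp: mem_neighbors_iff dest: equalityD2)
  moreover have "a \<noteq> u" using assms(1) by (auto simp: mem_neighbors_iff adj_irrefl dest: equalityD2)
  moreover have "card {a, u, w} \<le> 3" by (simp add: card_insert_le_m1)
  ultimately show ?thesis using assms
    by (auto simp: dense_piece_def dissociation_set_card_le_2 card_insert_le_m1)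
qed

lemma dense_piece_at_leaves:
  assumes "2 \<le> degree V E u" and NL_sub: "NL \<subseteq> neighbors V E u"
    and leaves: "\<forall>a\<in>NL. neighbors V E a = {u}"
    and "card (neighbors V E u - NL) \<le> 1"
  shows "\<exists>R A. dense_piece V E R A"
proof -
  have nbrs_u: "neighbors V E u = NL \<union> (neighbors V E u - NL)" using NL_sub by blast
  have "2 \<le> card (neighbors V E u)" using assms(1) by (simp add: degree_eq_card_neighbors)
  also have "\<dots> \<le> card NL + card (neighbors V E u - NL)"
    by (subst nbrs_u) (rule card_Un_le)
  finally consider "2 \<le> card NL" | "card NL = 1" "card (neighbors V E u - NL) = 1"
    using assms(4) by linarith
  then show ?thesis
  proof cases
    case 1
    have "NL \<subseteq> V" using NL_sub neighbors_subset[of V E u] by (rule order_trans)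
    then show ?thesis using dense_piece_pendant_star[OF _ 1 leaves] by blast
  next
    case 2
    then obtain a w where "NL = {a}" "neighbors V E u - NL = {w}"
      by (meson card_1_singletonE)
    then have "neighbors V E a = {u}" "neighbors V E u = {a, w}"
      using leaves nbrs_u by auto
    then show ?thesis by (blast intro: dense_piece_pendant_path)
  qed
qed

lemma all_leaves_edge_component:
  assumes "v \<in> V" "\<forall>x\<in>V. degree V E x = 1"
  shows "\<exists>u w. neighbors V E u = {w} \<and> neighbors V E w = {u}"
proof -
  obtain u where u: "neighbors V E v = {u}"
    using assms by (auto simp: degree_eq_card_neighbors card_1_singleton_iff)
  then have "u \<in> V" using neighbors_subset[of V E v] by blast
  moreover have "v \<in> neighbors V E u"
    using mem_neighbors_commute[of u V E v] u assms(1) by simp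
  ultimately have "neighbors V E u = {v}" using assms(2) by (intro neighbors_eq_singleton) auto
  then show ?thesis using u by blast
qed

text \<open>Unless there is an isolated vertex or an isolated edge, a vertex u of degree at most 1 in
  the forest obtained by deleting all leaves carries at least one leaf, and all but at most one
  of its neighbours are leaves.\<close>
lemma dense_piece_exists:
  assumes fin: "finite V" and ne: "V \<noteq> {}" and acyclic: "\<nexists>xs. is_cycle V E xs"
  shows "\<exists>R A. dense_piece V E R A"
proof -
  consider (isolated) v where "v \<in> V" "degree V E v = 0"
    | (edge) u v where "neighbors V E u = {v}" "neighbors V E v = {u}"
    | (no_small_component) "\<forall>v\<in>V. degree V E v \<noteq> 0"
        "\<nexists>u v. neighbors V E u = {v} \<and> neighbors V E v = {u}"
    by blast
  then show ?thesis
  proof cases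
    case isolated
    then show ?thesis using dense_piece_isolated[OF fin] by blast
  next
    case edge
    then show ?thesis using dense_piece_edge_component[OF edge] by blast
  next
    case no_small_component
    define L where "L = {v \<in> V. degree V E v = 1}"
    have leaf_nbr: "neighbors V E a = {u}" if "a \<in> L" "u \<in> neighbors V E a" for a u
      using that by (intro neighbors_eq_singleton) (auto simp: L_def)
    have "V - L \<noteq> {}"
      using all_leaves_edge_component[of _ V E] ne no_small_component(2) by (auto simp: L_def)
    moreover have "\<nexists>xs. is_cycle (V - L) E xs" using acyclic is_cycle_mono by blast
    ultimately obtain u where u: "u \<in> V - L" "degree (V - L) E u \<le> 1"
      using acyclic_has_vertex_degree_le_1[of "V - L" E] fin by blast
    have "2 \<le> degree V E u"
      using u no_small_component(1) by (auto simp: L_def)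
    moreover have "\<forall>a\<in>neighbors V E u \<inter> L. neighbors V E a = {u}"
      using leaf_nbr mem_neighbors_commute[of _ V E u] u by blast
    moreover have "neighbors V E u - neighbors V E u \<inter> L = neighbors (V - L) E u"
      by (auto simp: neighbors_def)
    ultimately show ?thesis
      using dense_piece_at_leaves[of V E u "neighbors V E u \<inter> L"] u(2)
      by (simp add: degree_eq_card_neighbors)
  qed
qed

theorem acyclic_two_thirds_dissociation_set:
  assumes "finite V" "\<nexists>xs. is_cycle V E xs"
  shows "\<exists>F. dissociation_set V E F \<and> 2 * card V \<le> 3 * card F"
  using assms
proof (induction "card V" arbitrary: V rule: less_induct)
  case less
  show ?case
  proof (cases "V = {}")
    case True
    then show ?thesis using dissociation_set_empty by auto
  next
    case False
    then obtain R A where "dense_piece V E R A" using dense_piece_exists less.prems by blast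
    then have R: "R \<subseteq> V" "R \<noteq> {}" and A: "dissociation_set R E A" "A \<subseteq> R"
      and closed: "\<forall>a\<in>A. neighbors V E a \<subseteq> R" and dense: "2 * card R \<le> 3 * card A"
      by (auto simp: dense_piece_def dissociation_set_def)
    have "card (V - R) < card V"
      using R less.prems(1) by (intro psubset_card_mono) auto
    moreover have "\<nexists>xs. is_cycle (V - R) E xs" using less.prems(2) is_cycle_mono by blast
    ultimately obtain F where F: "dissociation_set (V - R) E F" "2 * card (V - R) \<le> 3 * card F"
      using less.hyps less.prems(1) by blast
    have "F \<subseteq> V - R" using F(1) by (simp add: dissociation_set_def)
    have "\<forall>a\<in>A. \<forall>x\<in>F. \<not> adj E x a"
    proof (intro ballI notI)
      fix a x assume "a \<in> A" "x \<in> F" "adj E x a"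
      then have "x \<in> neighbors V E a" using \<open>F \<subseteq> V - R\<close> by (auto simp: mem_neighbors_iff)
      then show False using closed \<open>a \<in> A\<close> \<open>x \<in> F\<close> \<open>F \<subseteq> V - R\<close> by blast
    qed
    then have "dissociation_set V E (F \<union> A)"
      using dissociation_set_Un dissociation_set_mono F(1) A(1) R(1) by blast
    moreover have "card (F \<union> A) = card F + card A"
      using \<open>F \<subseteq> V - R\<close> A(2) R(1) less.prems(1)
      by (intro card_Un_disjoint) (auto intro: finite_subset)
    moreover have "card V = card (V - R) + card R"
      using R(1) less.prems(1) by (metis card_Diff_subset card_mono finite_subset le_add_diff_inverse2)
    ultimately show ?thesis using F(2) dense by (intro exI[of _ "F \<union> A"]) auto
  qed
qed

subsection \<open>The upper bound for connected subcubic graphs\<close>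

lemma simple_graph_edgeE:
  assumes "simple_graph V E" "e \<in> E"
  obtains u v where "u \<noteq> v" "u \<in> V" "v \<in> V" "e = {u, v}"
  using assms unfolding simple_graph_def by blast

lemma simple_graph_finite_edges:
  assumes G: "simple_graph V E"
  shows "finite E"
proof -
  have "E \<subseteq> Pow V" by (auto elim: simple_graph_edgeE[OF G])
  moreover have "finite V" using G by (simp add: simple_graph_def)
  ultimately show ?thesis by (simp add: finite_subset)
qed

text \<open>Distances from r along breadth-first search yield a parent for every other vertex.\<close>
lemma connected_graph_parent_map:
  assumes conn: "connected_graph V E" and "r \<in> V"
  obtains p and d :: "'a \<Rightarrow> nat" where "\<forall>v\<in>V - {r}. adj E (p v) v \<and> d (p v) < d v"
proof -
  define R where "R = (\<lambda>x y. x \<in> V \<and> y \<in> V \<and> adj E x y)"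
  define d where "d v = (LEAST n. (R ^^ n) r v)" for v
  have "\<exists>u. adj E u v \<and> d u < d v" if "v \<in> V - {r}" for v
  proof -
    have "R\<^sup>*\<^sup>* r v" using conn \<open>r \<in> V\<close> that unfolding connected_graph_def R_def by blast
    then have path: "(R ^^ d v) r v" unfolding d_def by (rule LeastI_ex[OF rtranclp_imp_relpowp])
    moreover have "d v \<noteq> 0"
    proof
      assume "d v = 0"
      then show False using path that by simp
    qed
    then obtain m where "d v = Suc m" using not0_implies_Suc by blast
    with path obtain u where "(R ^^ m) r u" "R u v" by (auto elim: relpowp_Suc_E)
    moreover have "d u \<le> m" unfolding d_def using \<open>(R ^^ m) r u\<close> by (rule Least_le)
    ultimately show ?thesis using \<open>d v = Suc m\<close> by (auto simp: R_def)
  qed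
  then obtain p where "\<forall>v\<in>V - {r}. adj E (p v) v \<and> d (p v) < d v" by (metis bchoice)
  then show ?thesis by (rule that)
qed

theorem connected_card_vertices_le_card_edges_plus_1:
  assumes G: "simple_graph V E" and "V \<noteq> {}" and conn: "connected_graph V E"
  shows "card V \<le> card E + 1"
proof -
  obtain r where "r \<in> V" using \<open>V \<noteq> {}\<close> by blast
  obtain p and d :: "'a \<Rightarrow> nat" where parent: "\<forall>v\<in>V - {r}. adj E (p v) v \<and> d (p v) < d v"
    using connected_graph_parent_map[OF conn \<open>r \<in> V\<close>] by blast
  have "inj_on (\<lambda>v. {p v, v}) (V - {r})"
  proof (rule inj_onI)
    fix v w assume v: "v \<in> V - {r}" and w: "w \<in> V - {r}" and eq: "{p v, v} = {p w, w}"
    show "v = w"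
    proof (rule ccontr)
      assume "v \<noteq> w"
      then have "p v = w" "p w = v" using eq by (auto simp: doubleton_eq_iff)
      then have "d w < d v" "d v < d w" using parent v w by metis+
      then show False by simp
    qed
  qed
  moreover have "(\<lambda>v. {p v, v}) ` (V - {r}) \<subseteq> E" using parent by (auto simp: adj_def)
  ultimately have "card (V - {r}) \<le> card E"
    using card_inj_on_le simple_graph_finite_edges[OF G] by blast
  then show ?thesis using \<open>r \<in> V\<close> by (simp add: card_Diff_singleton)
qed

lemma incident_edgeE:
  assumes "simple_graph V E" "e \<in> E" "v \<in> e"
  obtains u where "u \<in> neighbors V E v" "e = {u, v}"
proof -
  obtain a b where "a \<noteq> b" "a \<in> V" "b \<in> V" "e = {a, b}"
    using simple_graph_edgeE[OF assms(1,2)] by blast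
  then obtain u where "u \<in> V" "u \<noteq> v" "e = {u, v}" using assms(3) by (auto simp: insert_commute)
  then show ?thesis using that assms(2) by (simp add: mem_neighbors_iff adj_def)
qed

lemma card_incident_edges_le_degree:
  assumes G: "simple_graph V E"
  shows "card {e \<in> E. v \<in> e} \<le> degree V E v"
proof -
  have "{e \<in> E. v \<in> e} \<subseteq> (\<lambda>u. {u, v}) ` neighbors V E v"
    by (auto elim: incident_edgeE[OF G])
  moreover have fin: "finite (neighbors V E v)"
    using G by (simp add: simple_graph_def finite_neighbors)
  ultimately have "card {e \<in> E. v \<in> e} \<le> card ((\<lambda>u. {u, v}) ` neighbors V E v)"
    by (simp add: card_mono)
  also have "\<dots> \<le> degree V E v"
    using fin by (simp add: card_image_le degree_eq_card_neighbors)
  finally show ?thesis .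
qed

text \<open>The edges inside a dissociation set form a matching.\<close>
lemma card_edges_within_dissociation_set:
  assumes G: "simple_graph V E" and F: "dissociation_set V E F"
  shows "2 * card {e \<in> E. e \<subseteq> F} \<le> card F"
proof -
  define M where "M = {e \<in> E. e \<subseteq> F}"
  have "finite F" using G F finite_subset by (auto simp: simple_graph_def dissociation_set_def)
  have card_2: "card e = 2" if "e \<in> M" for e
    using that by (auto simp: M_def elim!: simple_graph_edgeE[OF G])
  have "disjnt e e'" if e: "e \<in> M" and e': "e' \<in> M" and "e \<noteq> e'" for e e'
  proof (rule ccontr)
    assume "\<not> disjnt e e'"
    then obtain x where "x \<in> e" "x \<in> e'" by (auto simp: disjnt_def)
    then obtain y y' where "e = {y, x}" "e' = {y', x}" "y \<in> neighbors V E x" "y' \<in> neighbors V E x"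
      using e e' by (auto simp: M_def elim!: incident_edgeE[OF G])
    then have "{y, y'} \<subseteq> neighbors F E x" "y \<noteq> y'" "x \<in> F"
      using e e' \<open>e \<noteq> e'\<close> by (auto simp: M_def mem_neighbors_iff)
    then have "2 \<le> degree F E x"
      unfolding degree_eq_card_neighbors using \<open>finite F\<close>
      by (metis card_2_iff card_mono finite_neighbors)
    then show False using F \<open>x \<in> F\<close> by (auto simp: dissociation_set_def)
  qed
  then have "card (\<Union>M) = (\<Sum>e\<in>M. card e)"
    using \<open>finite F\<close> by (intro card_Union_disjoint) (auto simp: pairwise_def M_def intro: finite_subset)
  also have "\<dots> = 2 * card M" using card_2 by simp
  finally show ?thesis
    using card_mono[OF \<open>finite F\<close>, of "\<Union>M"] by (auto simp: M_def)
qed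

text \<open>Every edge lies inside F or is incident with one of the at most k edges at a vertex outside F.\<close>
lemma card_edges_le_dissociation_set:
  assumes G: "simple_graph V E" and F: "dissociation_set V E F"
    and max_degree: "\<forall>v\<in>V. degree V E v \<le> k"
  shows "2 * card E \<le> card F + 2 * k * card (V - F)"
proof -
  have "finite V" using G by (simp add: simple_graph_def)
  have "finite E" using G by (rule simple_graph_finite_edges)
  have "E \<subseteq> {e \<in> E. e \<subseteq> F} \<union> (\<Union>v\<in>V - F. {e \<in> E. v \<in> e})"
  proof
    fix e assume "e \<in> E"
    then obtain u v where "u \<in> V" "v \<in> V" "e = {u, v}" by (rule simple_graph_edgeE[OF G])
    then show "e \<in> {e \<in> E. e \<subseteq> F} \<union> (\<Union>v\<in>V - F. {e \<in> E. v \<in> e})"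
      using \<open>e \<in> E\<close> by auto
  qed
  then have "card E \<le> card ({e \<in> E. e \<subseteq> F} \<union> (\<Union>v\<in>V - F. {e \<in> E. v \<in> e}))"
    using \<open>finite E\<close> \<open>finite V\<close> by (intro card_mono) auto
  also have "\<dots> \<le> card {e \<in> E. e \<subseteq> F} + card (\<Union>v\<in>V - F. {e \<in> E. v \<in> e})"
    by (rule card_Un_le)
  also have "card (\<Union>v\<in>V - F. {e \<in> E. v \<in> e}) \<le> (\<Sum>v\<in>V - F. card {e \<in> E. v \<in> e})"
    using \<open>finite V\<close> by (intro card_UN_le) simp
  also have "\<dots> \<le> (\<Sum>v\<in>V - F. k)"
    using card_incident_edges_le_degree[OF G] max_degree by (intro sum_mono) (auto intro: le_trans)
  finally have "card E \<le> card {e \<in> E. e \<subseteq> F} + card (V - F) * k" by simp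
  then show ?thesis using card_edges_within_dissociation_set[OF G F] by (simp add: algebra_simps)
qed

lemma finite_dissociation_set_cards:
  "finite V \<Longrightarrow> finite {card F | F. dissociation_set V E F}"
  by (rule finite_subset[of _ "card ` Pow V"]) (auto simp: dissociation_set_def)

lemma dissociation_number_ge:
  assumes "finite V" "dissociation_set V E F"
  shows "card F \<le> dissociation_number V E"
  unfolding dissociation_number_def
  using finite_dissociation_set_cards[OF assms(1)] assms(2) by (auto intro: Max_ge)

lemma dissociation_number_attained:
  assumes "finite V"
  obtains F where "dissociation_set V E F" "card F = dissociation_number V E"
proof -
  have "{card F | F. dissociation_set V E F} \<noteq> {}"
    using dissociation_set_empty by blast
  then have "dissociation_number V E \<in> {card F | F. dissociation_set V E F}"
    unfolding dissociation_number_def using finite_dissociation_set_cards[OF assms] by (rule Max_in[rotated])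
  then obtain F where "dissociation_set V E F" "dissociation_number V E = card F" by blast
  then show ?thesis using that by simp
qed

theorem acyclic_dissociation_number_ge:
  assumes "finite V" "\<nexists>xs. is_cycle V E xs"
  shows "2 * card V \<le> 3 * dissociation_number V E"
proof -
  obtain F where "dissociation_set V E F" "2 * card V \<le> 3 * card F"
    using acyclic_two_thirds_dissociation_set[OF assms] by blast
  then show ?thesis using dissociation_number_ge[OF assms(1)] by fastforce
qed

theorem connected_subcubic_dissociation_number_le:
  assumes G: "simple_graph V E" and "V \<noteq> {}" and "connected_graph V E"
    and subcubic: "\<forall>v\<in>V. degree V E v \<le> 3"
  shows "5 * dissociation_number V E \<le> 4 * card V + 2"
proof -
  have "finite V" using G by (simp add: simple_graph_def)
  then obtain F where F: "dissociation_set V E F" "card F = dissociation_number V E"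
    by (rule dissociation_number_attained)
  have "F \<subseteq> V" using F(1) by (simp add: dissociation_set_def)
  then have "card (V - F) = card V - card F" "card F \<le> card V"
    using \<open>finite V\<close> by (simp_all add: card_Diff_subset card_mono finite_subset)
  moreover have "card V \<le> card E + 1"
    using connected_card_vertices_le_card_edges_plus_1 assms by blast
  moreover have "2 * card E \<le> card F + 2 * 3 * card (V - F)"
    using card_edges_le_dissociation_set[OF G F(1) subcubic] .
  ultimately show ?thesis using F(2) by linarith
qed

lemma subcubic_tree_dissociation_number_bounds:
  assumes "subcubic_tree V E"
  shows "2 * card V \<le> 3 * dissociation_number V E"
    and "5 * dissociation_number V E \<le> 4 * card V + 2"
proof -
  have "simple_graph V E" "V \<noteq> {}" "connected_graph V E" "\<nexists>xs. is_cycle V E xs"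
    "\<forall>v\<in>V. degree V E v \<le> 3"
    using assms by (auto simp: subcubic_tree_def is_tree_def)
  moreover have "finite V" using \<open>simple_graph V E\<close> by (simp add: simple_graph_def)
  ultimately show "2 * card V \<le> 3 * dissociation_number V E"
    and "5 * dissociation_number V E \<le> 4 * card V + 2"
    using acyclic_dissociation_number_ge connected_subcubic_dissociation_number_le by blast+
qed

subsection \<open>Extremal examples\<close>

lemma is_cycle_card_edges_ge_3:
  assumes "finite E" and cycle: "is_cycle V E xs"
  shows "3 \<le> card E"
proof -
  define n where "n = length xs"
  have "3 \<le> n" "distinct xs" and adj_next: "\<And>i. Suc i < n \<Longrightarrow> adj E (xs ! i) (xs ! Suc i)"
    and "adj E (last xs) (hd xs)"
    using cycle by (auto simp: is_cycle_def n_def)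
  moreover have "xs \<noteq> []" using \<open>3 \<le> n\<close> by (auto simp: n_def)
  ultimately have edges: "{{xs ! 0, xs ! 1}, {xs ! 1, xs ! 2}, {xs ! (n - 1), xs ! 0}} \<subseteq> E"
    using adj_next[of 0] adj_next[of 1]
    by (auto simp: adj_def numeral_2_eq_2 n_def last_conv_nth hd_conv_nth)
  have "xs ! i \<noteq> xs ! j" if "i < n" "j < n" "i \<noteq> j" for i j
    using \<open>distinct xs\<close> that by (simp add: n_def nth_eq_iff_index_eq)
  then have "card {{xs ! 0, xs ! 1}, {xs ! 1, xs ! 2}, {xs ! (n - 1), xs ! 0}} = 3"
    using \<open>3 \<le> n\<close> by (auto simp: doubleton_eq_iff card_insert_if)
  then show ?thesis using card_mono[OF \<open>finite E\<close> edges] by simp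
qed

lemma small_connected_graph_subcubic_tree:
  assumes "simple_graph V E" "V \<noteq> {}" "connected_graph V E" "card V \<le> 4" "card E < 3"
  shows "subcubic_tree V E"
proof -
  have "finite V" using assms(1) by (simp add: simple_graph_def)
  have "finite E" using assms(1) by (rule simple_graph_finite_edges)
  have "\<forall>v\<in>V. degree V E v \<le> 3"
  proof
    fix v assume "v \<in> V"
    then have "degree V E v \<le> card V - 1" by (rule degree_le_card_minus_1[OF \<open>finite V\<close>])
    then show "degree V E v \<le> 3" using assms(4) by linarith
  qed
  moreover have "\<nexists>xs. is_cycle V E xs"
    using is_cycle_card_edges_ge_3[OF \<open>finite E\<close>] assms(5) by fastforce
  ultimately show ?thesis using assms by (simp add: subcubic_tree_def is_tree_def)
qed

lemma subcubic_tree_path_3: "subcubic_tree {0, 1, 2 :: nat} {{0, 1}, {1, 2}}"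
proof (rule small_connected_graph_subcubic_tree)
  let ?R = "\<lambda>x y. x \<in> {0, 1, 2 :: nat} \<and> y \<in> {0, 1, 2} \<and> adj {{0, 1}, {1, 2}} x y"
  have "?R 0 1" "?R 1 0" "?R 1 2" "?R 2 1" by (auto simp: adj_def insert_commute)
  then have "?R\<^sup>*\<^sup>* u v" if "u \<in> {0, 1, 2}" "v \<in> {0, 1, 2}" for u v
    using that by (auto intro: converse_rtranclp_into_rtranclp)
  then show "connected_graph {0, 1, 2 :: nat} {{0, 1}, {1, 2}}"
    unfolding connected_graph_def by blast
  show "simple_graph {0, 1, 2 :: nat} {{0, 1}, {1, 2}}"
    unfolding simple_graph_def by (intro conjI ballI finite.intros; elim insertE emptyE; force)
qed (auto simp: card_insert_if doubleton_eq_iff)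

lemma subcubic_tree_edge: "subcubic_tree {0, 1 :: nat} {{0, 1}}"
proof (rule small_connected_graph_subcubic_tree)
  show "connected_graph {0, 1 :: nat} {{0, 1}}"
    by (auto simp: connected_graph_def adj_def insert_commute)
  show "simple_graph {0, 1 :: nat} {{0, 1}}"
    by (auto simp: simple_graph_def)
qed auto

lemma dissociation_number_path_3: "dissociation_number {0, 1, 2 :: nat} {{0, 1}, {1, 2}} = 2"
proof -
  have "2 * 3 \<le> 3 * dissociation_number {0, 1, 2 :: nat} {{0, 1}, {1, 2}}"
    "5 * dissociation_number {0, 1, 2 :: nat} {{0, 1}, {1, 2}} \<le> 4 * 3 + 2"
    using subcubic_tree_dissociation_number_bounds[OF subcubic_tree_path_3] by simp_all
  then show ?thesis by linarith
qed

lemma dissociation_number_edge: "dissociation_number {0, 1 :: nat} {{0, 1}} = 2"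
proof -
  have "dissociation_set {0, 1 :: nat} {{0, 1}} {0, 1}"
    by (rule dissociation_set_card_le_2) auto
  then have "2 \<le> dissociation_number {0, 1 :: nat} {{0, 1}}"
    using dissociation_number_ge[of "{0, 1 :: nat}"] by fastforce
  moreover have "5 * dissociation_number {0, 1 :: nat} {{0, 1}} \<le> 4 * 2 + 2"
    using subcubic_tree_dissociation_number_bounds(2)[OF subcubic_tree_edge] by simp
  ultimately show ?thesis by linarith
qed

theorem theorem2p4:
  shows "(\<forall>(V :: 'a set) E. subcubic_tree V E \<longrightarrow>
            2 * real (card V) / 3 \<le> real (dissociation_number V E) \<and>
            real (dissociation_number V E) \<le> (4 * real (card V) + 2) / 5)
       \<and> (\<exists>(V :: nat set) E. subcubic_tree V E \<and>
            real (dissociation_number V E) = 2 * real (card V) / 3)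
       \<and> (\<exists>(V :: nat set) E. subcubic_tree V E \<and>
            real (dissociation_number V E) = (4 * real (card V) + 2) / 5)"
proof (intro conjI allI impI)
  fix V :: "'a set" and E assume "subcubic_tree V E"
  then have "real (2 * card V) \<le> real (3 * dissociation_number V E)"
    and "real (5 * dissociation_number V E) \<le> real (4 * card V + 2)"
    using subcubic_tree_dissociation_number_bounds of_nat_mono by blast+
  then show "2 * real (card V) / 3 \<le> real (dissociation_number V E)"
    and "real (dissociation_number V E) \<le> (4 * real (card V) + 2) / 5"
    by simp_all
next
  show "\<exists>(V :: nat set) E. subcubic_tree V E \<and>
      real (dissociation_number V E) = 2 * real (card V) / 3"
    using subcubic_tree_path_3 dissociation_number_path_3 by force
next
  show "\<exists>(V :: nat set) E. subcubic_tree V E \<and>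
      real (dissociation_number V E) = (4 * real (card V) + 2) / 5"
    using subcubic_tree_edge dissociation_number_edge by force
qed

end
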